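(* Let $m_1,m_2\ge 1$ be integers with $\gcd(m_1,m_2)=1$, and let $a\ne b$ be complex numbers such that $T_{m_1}(a)=T_{m_1}(b)$ and $T_{m_2}(a)=T_{m_2}(b)$. Then $T_{m_1m_2}'(a)=T_{m_1m_2}'(b)=0$.
   Context: $T_n$ denotes the Chebyshev polynomial of the first kind of degree $n$, defined by $T_n(\cos\phi)=\cos(n\phi)$. *)

theory Defs
  imports "HOL-Computational_Algebra.Polynomial"
begin

text \<open>Chebyshev polynomials of the first kind, via the standard recurrence
  T_0 = 1, T_1 = X, T_(n+2) = 2 X T_(n+1) - T_n, which is equivalent to
  T_n(cos phi) = cos(n phi).\<close>
fun cheb_T :: "nat \<Rightarrow> complex poly" where
  "cheb_T 0 = 1"
| "cheb_T (Suc 0) = [:0, 1:]"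
| "cheb_T (Suc (Suc n)) = [:0, 2:] * cheb_T (Suc n) - cheb_T n"

end

theory Submission
  imports Defs
begin

(* Every complex x can be written x = (u + 1/u)/2 (the Joukowski map) with u nonzero, and
   in this parameter T_n(x) = (u^n + u^-n)/2 and T_n'(x) (u - 1/u) = n (u^n - u^-n).
   Two parameters give the same point iff v = u or v = 1/u, so T_m(a) = T_m(b) means
   u^m = v^m or u^m = v^-m.  If the same alternative held for both m1 and m2, coprimality
   (via Bezout) would give u = v or u = 1/v, i.e. a = b.  In the mixed case u^(m1 m2)
   equals both v^(m1 m2) and v^-(m1 m2), hence u^(m1 m2) = u^-(m1 m2); the same coprimality
   argument excludes u = 1/u, and the derivative formula gives T'_(m1 m2)(a) = 0, and
   symmetrically T'_(m1 m2)(b) = 0. *)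

text \<open>A common root of unity of two coprime orders is 1: by Bezout, 1 is an integer
  combination of the two orders.\<close>
lemma coprime_root_of_unity:
  fixes c :: "'a :: field"
  assumes "coprime p q" "c ^ p = 1" "c ^ q = 1"
  shows "c = 1"
proof (cases "p = 0")
  case True
  then show ?thesis using assms by simp
next
  case False
  then obtain x y where "p * x = q * y + 1"
    using bezout_nat[of p q] assms(1) by auto
  then have "c ^ (p * x) = c ^ (q * y) * c"
    by simp
  then show ?thesis
    using assms by (simp add: power_mult)
qed

lemma eq_if_coprime_powers_eq:
  fixes x y :: "'a :: field"
  assumes "coprime p q" "y \<noteq> 0" "x ^ p = y ^ p" "x ^ q = y ^ q"
  shows "x = y"
proof -
  have "(x / y) ^ p = 1" "(x / y) ^ q = 1"
    using assms by (simp_all add: power_divide)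
  then have "x / y = 1"
    by (rule coprime_root_of_unity[OF assms(1)])
  then show ?thesis
    using assms(2) by simp
qed

text \<open>The Joukowski map.  In the parameter u of x = (u + 1/u)/2 the Chebyshev polynomials
  become power maps, which is how all identities below are obtained.\<close>
definition joukowski :: "complex \<Rightarrow> complex" where
  "joukowski u = (u + inverse u) / 2"

text \<open>Every complex number is a Joukowski value: u = a + sqrt(a^2 - 1) is a preimage of a.\<close>
lemma joukowski_surj:
  obtains u where "u \<noteq> 0" "joukowski u = a"
proof -
  define s where "s = csqrt (a\<^sup>2 - 1)"
  have "(a + s) * (a - s) = 1"
    by (simp add: s_def algebra_simps power2_eq_square[symmetric])
  then have "a + s \<noteq> 0" and "inverse (a + s) = a - s"
    by (auto intro: inverse_unique)
  then show ?thesis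
    using that[of "a + s"] by (simp add: joukowski_def)
qed

text \<open>The fibres of the Joukowski map are the pairs {u, 1/u}: the difference of two values
  factors as (u - v)(uv - 1)/(2uv).\<close>
lemma joukowski_eq_iff:
  assumes "u \<noteq> 0" "v \<noteq> 0"
  shows "joukowski u = joukowski v \<longleftrightarrow> u = v \<or> u = inverse v"
proof -
  have diff: "joukowski u - joukowski v = (u - v) * (u * v - 1) / (2 * u * v)"
    using assms by (simp add: joukowski_def field_simps)
  have "joukowski u = joukowski v \<longleftrightarrow> joukowski u - joukowski v = 0"
    by simp
  also have "\<dots> \<longleftrightarrow> (u - v) * (u * v - 1) = 0"
    unfolding diff using assms by simp
  also have "\<dots> \<longleftrightarrow> u = v \<or> u * v = 1"
    by simp
  also have "\<dots> \<longleftrightarrow> u = v \<or> u = inverse v"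
    using assms by (auto simp: field_simps)
  finally show ?thesis .
qed

lemma joukowski_power: "joukowski (u ^ n) = (u ^ n + inverse u ^ n) / 2"
  by (simp add: joukowski_def power_inverse)

lemma cheb_T_joukowski:
  assumes "u \<noteq> 0"
  shows "poly (cheb_T n) (joukowski u) = joukowski (u ^ n)"
proof (induction n rule: cheb_T.induct)
  case (3 n)
  define w p q where "w = inverse u" and "p = u ^ n" and "q = w ^ n"
  have uw: "u * w = 1"
    using assms by (simp add: w_def)
  have IH: "poly (cheb_T (Suc n)) (joukowski u) = (u * p + w * q) / 2"
    "poly (cheb_T n) (joukowski u) = (p + q) / 2"
    using 3 unfolding joukowski_power by (simp_all add: w_def p_def q_def)
  have "poly (cheb_T (Suc (Suc n))) (joukowski u)
      = (u + w) * poly (cheb_T (Suc n)) (joukowski u) - poly (cheb_T n) (joukowski u)"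
    by (simp add: joukowski_def w_def)
  also have "\<dots> = ((u + w) * (u * p + w * q) - (p + q)) / 2"
    unfolding IH by (simp add: field_simps)
  also have "\<dots> = (u * u * p + w * w * q) / 2"
    using uw by algebra
  also have "\<dots> = joukowski (u ^ Suc (Suc n))"
    unfolding joukowski_power by (simp add: w_def p_def q_def)
  finally show ?case .
qed (simp_all add: joukowski_def)

lemma pderiv_cheb_T_joukowski:
  assumes "u \<noteq> 0"
  shows "poly (pderiv (cheb_T n)) (joukowski u) * (u - inverse u) = of_nat n * (u ^ n - inverse u ^ n)"
proof (induction n rule: cheb_T.induct)
  case (3 n)
  define w p q where "w = inverse u" and "p = u ^ n" and "q = w ^ n"
  have uw: "u * w = 1"
    using assms by (simp add: w_def)
  have rec: "pderiv (cheb_T (Suc (Suc n)))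
      = [:2:] * cheb_T (Suc n) + [:0, 2:] * pderiv (cheb_T (Suc n)) - pderiv (cheb_T n)"
    by (simp add: pderiv_mult pderiv_diff pderiv_pCons pderiv_smult)
  have T: "2 * poly (cheb_T (Suc n)) (joukowski u) = u * p + w * q"
    using cheb_T_joukowski[OF assms, of "Suc n"] unfolding joukowski_power
    by (simp add: w_def p_def q_def mult.commute)
  have IH1: "poly (pderiv (cheb_T (Suc n))) (joukowski u) * (u - w)
      = (of_nat n + 1) * (u * p - w * q)"
    and IH0: "poly (pderiv (cheb_T n)) (joukowski u) * (u - w) = of_nat n * (p - q)"
    using 3 by (simp_all add: w_def p_def q_def)
  have "poly (pderiv (cheb_T (Suc (Suc n)))) (joukowski u) * (u - w)
      = 2 * poly (cheb_T (Suc n)) (joukowski u) * (u - w)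
        + (u + w) * (poly (pderiv (cheb_T (Suc n))) (joukowski u) * (u - w))
        - poly (pderiv (cheb_T n)) (joukowski u) * (u - w)"
    unfolding rec by (simp add: joukowski_def w_def field_simps)
  also have "\<dots> = (u * p + w * q) * (u - w)
        + (u + w) * ((of_nat n + 1) * (u * p - w * q)) - of_nat n * (p - q)"
    unfolding T IH1 IH0 ..
  also have "\<dots> = (of_nat n + 2) * (u * u * p - w * w * q)"
    using uw by algebra
  also have "\<dots> = of_nat (Suc (Suc n)) * (u ^ Suc (Suc n) - w ^ Suc (Suc n))"
    by (simp add: p_def q_def algebra_simps)
  finally show ?case
    unfolding w_def .
qed (simp_all add: pderiv_pCons)

lemma cheb_T_joukowski_eq_iff:
  assumes "u \<noteq> 0" "v \<noteq> 0"
  shows "poly (cheb_T m) (joukowski u) = poly (cheb_T m) (joukowski v)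
    \<longleftrightarrow> u ^ m = v ^ m \<or> u ^ m = inverse v ^ m"
  using assms by (simp add: cheb_T_joukowski joukowski_eq_iff power_inverse)

lemma cheb_T_critical_point:
  assumes "u \<noteq> 0" "u \<noteq> inverse u" "u ^ n = inverse u ^ n"
  shows "poly (pderiv (cheb_T n)) (joukowski u) = 0"
  using pderiv_cheb_T_joukowski[OF assms(1), of n] assms(2,3) by simp

text \<open>The mixed case: if u^p = v^p and u^q = v^-q for coprime p, q, then u^(pq) equals
  both v^(pq) and v^-(pq), so u^(pq) = u^-(pq); and u = 1/u would force v = 1/u.\<close>
lemma cheb_T_critical_point_mixed:
  fixes u v :: complex
  assumes "u \<noteq> 0" "v \<noteq> 0" "coprime p q"
    and "u ^ p = v ^ p" "u ^ q = inverse v ^ q" "v \<noteq> inverse u"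
  shows "poly (pderiv (cheb_T (p * q))) (joukowski u) = 0"
proof (rule cheb_T_critical_point[OF assms(1)])
  have "u ^ (p * q) = v ^ (p * q)"
    by (simp add: power_mult assms(4))
  moreover have "u ^ (p * q) = inverse v ^ (p * q)"
    using power_mult[of u q p] power_mult[of "inverse v" q p] assms(5) by (simp add: mult.commute)
  ultimately show "u ^ (p * q) = inverse u ^ (p * q)"
    by (simp add: power_inverse)
  show "u \<noteq> inverse u"
  proof
    assume "u = inverse u"
    then have "v ^ p = inverse u ^ p"
      using assms(4) by simp
    moreover have "v ^ q = inverse u ^ q"
      using assms(5) by (simp add: power_inverse)
    ultimately have "v = inverse u"
      using eq_if_coprime_powers_eq[OF assms(3), of "inverse u" v] assms(1) by simp
    with assms(6) show False ..
  qed
qed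

text \<open>The mixed hypotheses are symmetric in u and v, so both points are critical.\<close>
lemma cheb_T_critical_points_mixed:
  fixes u v :: complex
  assumes "u \<noteq> 0" "v \<noteq> 0" "coprime p q"
    and "u ^ p = v ^ p" "u ^ q = inverse v ^ q" "u \<noteq> inverse v"
  shows "poly (pderiv (cheb_T (p * q))) (joukowski u) = 0
    \<and> poly (pderiv (cheb_T (p * q))) (joukowski v) = 0"
proof
  have "v \<noteq> inverse u"
    using assms(6) by (metis inverse_inverse_eq)
  then show "poly (pderiv (cheb_T (p * q))) (joukowski u) = 0"
    by (rule cheb_T_critical_point_mixed[OF assms(1-5)])
  have "v ^ q = inverse u ^ q"
    using assms(5) by (simp add: power_inverse)
  then show "poly (pderiv (cheb_T (p * q))) (joukowski v) = 0"
    by (rule cheb_T_critical_point_mixed[OF assms(2,1,3) assms(4)[symmetric] _ assms(6)])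
qed

theorem corollary2p1:
  fixes m1 m2 :: nat and a b :: complex
  assumes "m1 \<ge> 1" and "m2 \<ge> 1" and "coprime m1 m2"
    and "a \<noteq> b"
    and "poly (cheb_T m1) a = poly (cheb_T m1) b"
    and "poly (cheb_T m2) a = poly (cheb_T m2) b"
  shows "poly (pderiv (cheb_T (m1 * m2))) a = 0 \<and> poly (pderiv (cheb_T (m1 * m2))) b = 0"
proof -
  obtain u where u: "u \<noteq> 0" "joukowski u = a"
    by (rule joukowski_surj)
  obtain v where v: "v \<noteq> 0" "joukowski v = b"
    by (rule joukowski_surj)
  have "u \<noteq> v" "u \<noteq> inverse v"
    using assms(4) u v joukowski_eq_iff[OF u(1) v(1)] by auto
  then have "\<not> (u ^ m1 = v ^ m1 \<and> u ^ m2 = v ^ m2)"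
    and "\<not> (u ^ m1 = inverse v ^ m1 \<and> u ^ m2 = inverse v ^ m2)"
    using eq_if_coprime_powers_eq[OF assms(3) v(1), of u]
      eq_if_coprime_powers_eq[OF assms(3) nonzero_imp_inverse_nonzero[OF v(1)], of u] by auto
  moreover have "u ^ m1 = v ^ m1 \<or> u ^ m1 = inverse v ^ m1"
    and "u ^ m2 = v ^ m2 \<or> u ^ m2 = inverse v ^ m2"
    using assms(5,6) u v cheb_T_joukowski_eq_iff[OF u(1) v(1)] by auto
  ultimately consider
      "u ^ m1 = v ^ m1" "u ^ m2 = inverse v ^ m2"
    | "u ^ m2 = v ^ m2" "u ^ m1 = inverse v ^ m1"
    by blast
  then show ?thesis
  proof cases
    case 1
    then show ?thesis
      using cheb_T_critical_points_mixed[OF u(1) v(1) assms(3)] \<open>u \<noteq> inverse v\<close> u v by simp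
  next
    case 2
    then show ?thesis
      using cheb_T_critical_points_mixed[OF u(1) v(1) coprime_commute[THEN iffD1, OF assms(3)]]
        \<open>u \<noteq> inverse v\<close> u v by (simp add: mult.commute)
  qed
qed

end
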